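(* Let $n=2^s$, $q=2^r$ ($s,r$ positive integers). For $\beta\in\mathbb{F}_q$ let \[ \delta(n-1,q;\beta)=|\{(\alpha_1,\dots,\alpha_{n-1})\in(\mathbb{F}_q^* )^{n-1}:\alpha_1+\cdots+\alpha_{n-1}+\alpha_1^{-1}\cdots\alpha_{n-1}^{-1}=\beta\}|. \] Then $\delta(n-1,q;0)=q^{-1}\{(q-1)^{n-1}+1\}$, and for $\beta\in\mathbb{F}_q^*$, \[ \delta(n-1,q;\beta)=K_{n-2}(\lambda;\beta^{-1})+q^{-1}\{(q-1)^{n-1}+1\}. \]
   Context: $\mathbb{F}_q$ is the field with $q$ elements, $tr$ the absolute trace to $\mathbb{F}_2$, $\lambda(x)=(-1)^{tr(x)}$. For $m\ge1$ and $a\in\mathbb{F}_q^*$, $K_m(\lambda;a)=\sum_{\alpha_1,\dots,\alpha_m\in\mathbb{F}_q^*}\lambda(\alpha_1+\cdots+\alpha_m+a\alpha_1^{-1}\cdots\alpha_m^{-1})$; by convention $K_0(\lambda;a)=\lambda(a)$. *)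

theory Defs
  imports "HOL-Library.FuncSet" "HOL-Library.Cardinality" Complex_Main
begin

definition abs_tr :: "nat \<Rightarrow> 'a::field \<Rightarrow> 'a" where
  "abs_tr r x = (\<Sum>i<r. x ^ (2 ^ i))"

text \<open>Canonical additive character lambda(x) = (-1)^tr(x); tr(x) lies in F_2 = {0,1}.\<close>
definition lam :: "nat \<Rightarrow> 'a::field \<Rightarrow> real" where
  "lam r x = (if abs_tr r x = 0 then 1 else -1)"

definition nz_tuples :: "nat \<Rightarrow> (nat \<Rightarrow> 'a::field) set" where
  "nz_tuples m = PiE {..<m} (\<lambda>_. UNIV - {0})"

definition Kl :: "nat \<Rightarrow> nat \<Rightarrow> 'a::{field,finite} \<Rightarrow> real" where
  "Kl r m a = (if m = 0 then lam r a else
     (\<Sum>\<alpha>\<in>nz_tuples m. lam r ((\<Sum>i<m. \<alpha> i) + a * (\<Prod>i<m. inverse (\<alpha> i)))))"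

definition delta :: "nat \<Rightarrow> 'a::{field,finite} \<Rightarrow> nat" where
  "delta m \<beta> = card {\<alpha>\<in>nz_tuples m. (\<Sum>i<m. \<alpha> i) + (\<Prod>i<m. inverse (\<alpha> i)) = \<beta>}"

end

(*
  Let m = n - 1 and S(b) = sum of lambda(g_1 + ... + g_m) over the tuples g in (F_q^* )^m with
  g_1^-1 ... g_m^-1 = b. Detecting the equation with the additive character gives
    q delta(beta) = (q - 1)^m
                    + sum_{c <> 0} lambda(c beta) sum_a lambda(c (a_1 + ... + a_m + a_1^-1 ... a_m^-1)).
  The substitution a = g / c turns the inner sum into
    sum_g lambda(g_1 + ... + g_m) lambda(c^n g_1^-1 ... g_m^-1).
  Since n is a power of 2, lambda(c beta) = lambda(c^n beta^n) and c |-> c^n permutes F_q^*, so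
  orthogonality collapses the c-sum onto the fibre g_1^-1 ... g_m^-1 = beta^n; as m is odd, the
  remaining full sum of lambda(g_1 + ... + g_m) is (-1)^m = -1, and altogether
    q delta(beta) = (q - 1)^m + 1 + q S(beta^n).
  Finally S(0) = 0, S(beta^n) = S(beta) by the Frobenius, and solving for the last coordinate
  identifies S(beta) with K_{n-2}(lambda; beta^-1).
*)

theory Submission
  imports Defs "HOL-Computational_Algebra.Polynomial" "HOL-Computational_Algebra.Primes"
begin

lemma of_nat_card_eq_zero: "of_nat CARD('a::{ring_1,finite}) = (0 :: 'a)"
proof -
  have "(\<Sum>x\<in>UNIV. x + 1) = (\<Sum>x\<in>UNIV. x :: 'a)"
    by (rule sum.reindex_bij_witness[of _ "\<lambda>x. x - 1" "\<lambda>x. x + 1"]) auto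
  then show ?thesis
    by (simp add: sum.distrib)
qed

lemma CHAR_eq_if_card_eq_prime_power:
  assumes "prime p" "CARD('a::{field,finite}) = p ^ r"
  shows "CHAR('a) = p"
proof -
  have "prime CHAR('a)"
    by (rule prime_CHAR_semidom) (simp add: finite_imp_CHAR_pos)
  moreover have "CHAR('a) dvd p ^ r"
    unfolding of_nat_eq_0_iff_char_dvd[symmetric]
    by (simp only: assms(2)[symmetric] of_nat_card_eq_zero)
  ultimately show ?thesis
    using assms(1) primes_dvd_imp_eq prime_dvd_power by blast
qed

lemma inj_power_2_power:
  assumes "CHAR('a::field) = 2"
  shows "inj (\<lambda>x::'a. x ^ 2 ^ s)"
proof (rule injI)
  fix x y :: 'a
  assume "x ^ 2 ^ s = y ^ 2 ^ s"
  have "(x - y) ^ 2 ^ s = x ^ 2 ^ s + y ^ 2 ^ s"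
    using assms by (simp add: minus_CHAR_2 freshmans_dream')
  also have "\<dots> = 0"
    using assms \<open>x ^ 2 ^ s = y ^ 2 ^ s\<close> by (simp add: minus_CHAR_2[symmetric])
  finally show "x = y" by simp
qed

lemma power_2_power_eq_iff:
  assumes "CHAR('a::field) = 2"
  shows "(x :: 'a) ^ 2 ^ s = y ^ 2 ^ s \<longleftrightarrow> x = y"
  using inj_power_2_power[OF assms] by (auto dest: injD)

lemma bij_betw_power_2_power_nonzero:
  assumes "CHAR('a::{field,finite}) = 2"
  shows "bij_betw (\<lambda>x::'a. x ^ 2 ^ s) (UNIV - {0}) (UNIV - {0})"
proof -
  have "bij (\<lambda>x::'a. x ^ 2 ^ s)"
    using inj_power_2_power[OF assms] finite_UNIV_inj_surj[of "\<lambda>x::'a. x ^ 2 ^ s"]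
    by (simp add: bij_def)
  then show ?thesis
    by (rule bij_betw_DiffI) simp_all
qed

lemma power_card_eq_self:
  fixes x :: "'a::{field,finite}"
  shows "x ^ CARD('a) = x"
proof (cases "x = 0")
  case False
  let ?U = "UNIV - {0::'a}"
  have "(\<Prod>y\<in>?U. x * y) = (\<Prod>y\<in>?U. y)"
    by (rule prod.reindex_bij_witness[of _ "\<lambda>y. y / x" "\<lambda>y. x * y"]) (use False in auto)
  then have "x ^ card ?U = 1"
    by (simp add: prod.distrib)
  moreover have "card ?U = CARD('a) - 1"
    by (simp add: card_Diff_subset)
  moreover have "x ^ CARD('a) = x * x ^ (CARD('a) - 1)"
    using finite_UNIV_card_ge_0[where 'a='a] by (simp add: power_eq_if)
  ultimately show ?thesis
    by simp
qed simp

lemma finite_nz_tuples: "finite (nz_tuples m :: (nat \<Rightarrow> 'a::{field,finite}) set)"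
  by (simp add: nz_tuples_def finite_PiE)

lemma card_nz_tuples: "card (nz_tuples m :: (nat \<Rightarrow> 'a::{field,finite}) set) = (CARD('a) - 1) ^ m"
  by (simp add: nz_tuples_def card_PiE card_Diff_subset)

lemma nz_tuples_nonzero: "\<alpha> \<in> nz_tuples m \<Longrightarrow> i < m \<Longrightarrow> \<alpha> i \<noteq> 0"
  by (auto simp: nz_tuples_def)

lemma restrict_mem_nz_tuples: "(\<And>i. i < m \<Longrightarrow> f i \<noteq> 0) \<Longrightarrow> (\<lambda>i\<in>{..<m}. f i) \<in> nz_tuples m"
  by (simp add: nz_tuples_def)

lemma prod_inverse_nz_tuples_nonzero: "\<alpha> \<in> nz_tuples m \<Longrightarrow> (\<Prod>i<m. inverse (\<alpha> i)) \<noteq> 0"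
  by (simp add: nz_tuples_nonzero)

lemma sum_nz_tuples_Suc:
  "(\<Sum>\<alpha>\<in>nz_tuples (Suc m). f \<alpha>) =
     (\<Sum>x\<in>UNIV - {0::'a::{field,finite}}. \<Sum>\<alpha>\<in>nz_tuples m. f (\<alpha>(m := x)))"
proof -
  let ?ext = "\<lambda>(x, \<alpha>). \<alpha>(m := x)"
  have "inj_on ?ext ((UNIV - {0}) \<times> (nz_tuples m :: (nat \<Rightarrow> 'a) set))"
    unfolding nz_tuples_def by (rule inj_combinator) simp
  moreover have "nz_tuples (Suc m) = ?ext ` ((UNIV - {0}) \<times> (nz_tuples m :: (nat \<Rightarrow> 'a) set))"
    unfolding nz_tuples_def lessThan_Suc by (rule PiE_insert_eq)
  ultimately show ?thesis
    by (simp add: sum.reindex sum.cartesian_product case_prod_unfold)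
qed

lemma sum_lessThan_Suc_fun_upd: "(\<Sum>i<Suc m. (\<alpha>(m := x)) i) = (\<Sum>i<m. \<alpha> i) + (x :: 'a::comm_monoid_add)"
proof -
  have "(\<Sum>i<m. (\<alpha>(m := x)) i) = (\<Sum>i<m. \<alpha> i)"
    by (rule sum.cong) auto
  then show ?thesis
    by simp
qed

lemma prod_lessThan_Suc_fun_upd:
  "(\<Prod>i<Suc m. f ((\<alpha>(m := x)) i)) = (\<Prod>i<m. f (\<alpha> i)) * (f x :: 'a::comm_monoid_mult)"
proof -
  have "(\<Prod>i<m. f ((\<alpha>(m := x)) i)) = (\<Prod>i<m. f (\<alpha> i))"
    by (rule prod.cong) auto
  then show ?thesis
    by simp
qed

lemma bij_betw_nz_tuples_compose:
  fixes h :: "'a::field \<Rightarrow> 'a"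
  assumes h: "bij_betw h (UNIV - {0}) (UNIV - {0})"
  shows "bij_betw (\<lambda>\<alpha>. \<lambda>i\<in>{..<m}. h (\<alpha> i)) (nz_tuples m) (nz_tuples m)"
proof -
  let ?g = "inv_into (UNIV - {0}) h"
  have g: "bij_betw ?g (UNIV - {0}) (UNIV - {0})"
    by (rule bij_betw_inv_into[OF h])
  have h_nz: "h x \<noteq> 0" and g_nz: "?g x \<noteq> 0" if "x \<noteq> 0" for x
    using that bij_betwE[OF h] bij_betwE[OF g] by auto
  have maps: "(\<lambda>\<alpha>. \<lambda>i\<in>{..<m}. f (\<alpha> i)) \<in> nz_tuples m \<rightarrow> nz_tuples m"
    if "\<And>x. x \<noteq> 0 \<Longrightarrow> f x \<noteq> 0" for f :: "'a \<Rightarrow> 'a"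
    by (intro Pi_I restrict_mem_nz_tuples) (simp add: that nz_tuples_nonzero)
  have tuple_eqI: "\<alpha> = \<gamma>" if "\<alpha> \<in> nz_tuples m" "\<gamma> \<in> nz_tuples m" "\<And>i. i < m \<Longrightarrow> \<alpha> i = \<gamma> i"
    for \<alpha> \<gamma> :: "nat \<Rightarrow> 'a"
    using that unfolding nz_tuples_def by (intro PiE_ext) auto
  show ?thesis
  proof (rule bij_betwI[where g = "\<lambda>\<gamma>. \<lambda>i\<in>{..<m}. ?g (\<gamma> i)"])
    show "(\<lambda>\<alpha>. \<lambda>i\<in>{..<m}. h (\<alpha> i)) \<in> nz_tuples m \<rightarrow> nz_tuples m"
      using maps h_nz by blast
    show "(\<lambda>\<gamma>. \<lambda>i\<in>{..<m}. ?g (\<gamma> i)) \<in> nz_tuples m \<rightarrow> nz_tuples m"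
      using maps g_nz by blast
    show "(\<lambda>i\<in>{..<m}. ?g ((\<lambda>i\<in>{..<m}. h (\<alpha> i)) i)) = \<alpha>" if "\<alpha> \<in> nz_tuples m" for \<alpha>
      by (rule tuple_eqI[OF restrict_mem_nz_tuples that])
        (simp_all add: h_nz g_nz nz_tuples_nonzero[OF that] bij_betw_inv_into_left[OF h])
    show "(\<lambda>i\<in>{..<m}. h ((\<lambda>i\<in>{..<m}. ?g (\<gamma> i)) i)) = \<gamma>" if "\<gamma> \<in> nz_tuples m" for \<gamma>
      by (rule tuple_eqI[OF restrict_mem_nz_tuples that])
        (simp_all add: h_nz g_nz nz_tuples_nonzero[OF that] bij_betw_inv_into_right[OF h])
  qed
qed

lemma sum_nz_tuples_reindex:
  fixes h :: "'a::field \<Rightarrow> 'a"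
  assumes "bij_betw h (UNIV - {0}) (UNIV - {0})"
  shows "(\<Sum>\<alpha>\<in>nz_tuples m. f \<alpha>) = (\<Sum>\<gamma>\<in>nz_tuples m. f (\<lambda>i\<in>{..<m}. h (\<gamma> i)))"
  by (rule sum.reindex_bij_betw[OF bij_betw_nz_tuples_compose[OF assms], symmetric])

section \<open>Kloosterman sums and fibre sums over the product of inverses\<close>

lemma sum_if_mult_inverse_eq:
  fixes b p :: "'a::{field,finite}"
  assumes "b \<noteq> 0" "p \<noteq> 0"
  shows "(\<Sum>x\<in>UNIV - {0}. if p * inverse x = b then f x else 0) = f (inverse b * p)"
proof -
  have "(\<Sum>x\<in>UNIV - {0}. if p * inverse x = b then f x else 0) =
        (\<Sum>x\<in>UNIV - {0}. if x = inverse b * p then f x else 0)"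
    using assms by (intro sum.cong) (auto simp: field_simps)
  then show ?thesis
    using assms by (simp add: sum.delta)
qed

lemma Kl_eq_sum_nz_tuples:
  "Kl r k a = (\<Sum>\<alpha>\<in>nz_tuples k. lam r ((\<Sum>i<k. \<alpha> i) + a * (\<Prod>i<k. inverse (\<alpha> i))))"
  by (cases "k = 0") (simp_all add: Kl_def nz_tuples_def)

definition inv_prod_fiber_sum :: "nat \<Rightarrow> nat \<Rightarrow> 'a::{field,finite} \<Rightarrow> real" where
  "inv_prod_fiber_sum r m b = (\<Sum>\<gamma>\<in>{\<gamma>\<in>nz_tuples m. (\<Prod>i<m. inverse (\<gamma> i)) = b}. lam r (\<Sum>i<m. \<gamma> i))"

lemma inv_prod_fiber_sum_eq_sum_if:
  "inv_prod_fiber_sum r m b =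
     (\<Sum>\<gamma>\<in>nz_tuples m. if (\<Prod>i<m. inverse (\<gamma> i)) = b then lam r (\<Sum>i<m. \<gamma> i) else 0)"
  by (simp add: inv_prod_fiber_sum_def sum.inter_filter[OF finite_nz_tuples])

lemma inv_prod_fiber_sum_zero [simp]: "inv_prod_fiber_sum r m (0 :: 'a::{field,finite}) = 0"
proof -
  have "{\<gamma>\<in>nz_tuples m. (\<Prod>i<m. inverse (\<gamma> i)) = (0 :: 'a)} = {}"
    using prod_inverse_nz_tuples_nonzero by blast
  then show ?thesis
    by (simp only: inv_prod_fiber_sum_def sum.empty)
qed

lemma inv_prod_fiber_sum_Suc:
  assumes "b \<noteq> 0"
  shows "inv_prod_fiber_sum r (Suc k) b = Kl r k (inverse b)"
proof -
  have "inv_prod_fiber_sum r (Suc k) b =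
      (\<Sum>x\<in>UNIV - {0}. \<Sum>\<alpha>\<in>nz_tuples k.
         if (\<Prod>i<k. inverse (\<alpha> i)) * inverse x = b then lam r ((\<Sum>i<k. \<alpha> i) + x) else 0)"
    by (simp only: inv_prod_fiber_sum_eq_sum_if sum_nz_tuples_Suc sum_lessThan_Suc_fun_upd
        prod_lessThan_Suc_fun_upd)
  also have "\<dots> = (\<Sum>\<alpha>\<in>nz_tuples k. \<Sum>x\<in>UNIV - {0}.
         if (\<Prod>i<k. inverse (\<alpha> i)) * inverse x = b then lam r ((\<Sum>i<k. \<alpha> i) + x) else 0)"
    by (rule sum.swap)
  also have "\<dots> = (\<Sum>\<alpha>\<in>nz_tuples k. lam r ((\<Sum>i<k. \<alpha> i) + inverse b * (\<Prod>i<k. inverse (\<alpha> i))))"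
    using assms by (intro sum.cong refl sum_if_mult_inverse_eq prod_inverse_nz_tuples_nonzero)
  finally show ?thesis
    by (simp add: Kl_eq_sum_nz_tuples)
qed

section \<open>Fields of order \<open>2 ^ r\<close>\<close>

context
  fixes r :: nat
  assumes card_eq: "CARD('a::{field,finite}) = 2 ^ r"
begin

lemma CHAR_eq_2: "CHAR('a) = 2"
  by (rule CHAR_eq_if_card_eq_prime_power[OF two_is_prime_nat card_eq])

lemma two_eq_zero: "(2 :: 'a) = 0"
  using of_nat_CHAR[where 'a='a] by (simp add: CHAR_eq_2)

lemma add_eq_0_iff_eq: "(x + y :: 'a) = 0 \<longleftrightarrow> x = y"
proof -
  have "- y = y"
    by (rule uminus_CHAR_2[OF CHAR_eq_2])
  then show ?thesis
    by (simp only: eq_neg_iff_add_eq_0[symmetric])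
qed

lemma r_pos: "r > 0"
proof -
  have "card {0::'a, 1} \<le> CARD('a)"
    by (rule card_mono) auto
  then have "2 \<le> (2::nat) ^ r"
    using card_eq by simp
  then show ?thesis
    by (cases r) auto
qed

lemma power_2_power_add: "(x + y :: 'a) ^ 2 ^ k = x ^ 2 ^ k + y ^ 2 ^ k"
  by (rule freshmans_dream') (simp_all add: CHAR_eq_2)

lemma power_2_power_sum: "(\<Sum>i\<in>A. f i :: 'a) ^ 2 ^ k = (\<Sum>i\<in>A. f i ^ 2 ^ k)"
  by (rule freshmans_dream_sum') (simp_all add: CHAR_eq_2)

lemma abs_tr_add: "abs_tr r (x + y :: 'a) = abs_tr r x + abs_tr r y"
  by (simp add: abs_tr_def power_2_power_add sum.distrib)

lemma abs_tr_square: "abs_tr r (x ^ 2 :: 'a) = abs_tr r x"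
proof -
  have "abs_tr r (x ^ 2) = (\<Sum>i<r. x ^ 2 ^ Suc i)"
    by (simp add: abs_tr_def power_mult[symmetric] mult.commute)
  also have "\<dots> = (\<Sum>i\<in>{1..<Suc r}. x ^ 2 ^ i)"
    by (rule sum.reindex_bij_witness[of _ "\<lambda>i. i - 1" Suc]) auto
  also have "\<dots> = (\<Sum>i\<in>{1..<r}. x ^ 2 ^ i) + x ^ 2 ^ r"
    using r_pos by simp
  also have "x ^ 2 ^ r = x ^ 2 ^ 0"
    using power_card_eq_self[of x] card_eq by simp
  also have "(\<Sum>i\<in>{1..<r}. x ^ 2 ^ i) + x ^ 2 ^ 0 = abs_tr r x"
    using r_pos by (simp add: abs_tr_def lessThan_atLeast0 sum.atLeast_Suc_lessThan)
  finally show ?thesis .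
qed

lemma abs_tr_zero_or_one: "abs_tr r (x :: 'a) = 0 \<or> abs_tr r x = 1"
proof -
  have "abs_tr r x ^ 2 = abs_tr r (x ^ 2)"
    using power_2_power_sum[of "\<lambda>i. x ^ 2 ^ i" "{..<r}" 1]
    by (simp add: abs_tr_def power_mult[symmetric] mult.commute)
  then have "abs_tr r x ^ 2 = abs_tr r x"
    by (simp only: abs_tr_square)
  then have "abs_tr r x * (abs_tr r x - 1) = 0"
    by (simp add: power2_eq_square algebra_simps)
  then show ?thesis
    by simp
qed

text \<open>The trace is a polynomial of degree \<open>2 ^ (r - 1) < CARD('a)\<close>, so it cannot vanish everywhere.\<close>
lemma abs_tr_not_identically_zero: "\<exists>x :: 'a. abs_tr r x \<noteq> 0"
proof (rule ccontr)
  assume "\<nexists>x :: 'a. abs_tr r x \<noteq> 0"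
  then have all_roots: "{x :: 'a. abs_tr r x = 0} = UNIV"
    by auto
  define p :: "'a poly" where "p = (\<Sum>i<r. Polynomial.monom 1 (2 ^ i))"
  have poly_p: "poly p x = abs_tr r x" for x
    by (simp add: p_def abs_tr_def poly_sum poly_monom)
  have "coeff p (2 ^ (r - 1)) = (\<Sum>i<r. if i = r - 1 then 1 else 0)"
    unfolding p_def coeff_sum coeff_monom by (rule sum.cong) auto
  then have "p \<noteq> 0"
    using r_pos by auto
  then have "card {x. poly p x = 0} \<le> degree p"
    by (rule card_poly_roots_bound)
  also have "degree p \<le> 2 ^ (r - 1)"
    unfolding p_def
    by (rule degree_sum_le) (auto intro: order.trans[OF degree_monom_le] simp: power_increasing)
  also have "\<dots> < CARD('a)"
    using r_pos card_eq by simp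
  finally show False
    using all_roots by (simp add: poly_p)
qed

lemma lam_add: "lam r (x + y :: 'a) = lam r x * lam r y"
  using abs_tr_zero_or_one[of x] abs_tr_zero_or_one[of y] two_eq_zero
  by (auto simp: lam_def abs_tr_add)

lemma lam_zero [simp]: "lam r (0 :: 'a) = 1"
  by (simp add: lam_def abs_tr_def power_0_left)

lemma lam_power_2_power [simp]: "lam r (x ^ 2 ^ k :: 'a) = lam r x"
proof (induction k)
  case (Suc k)
  have "x ^ 2 ^ Suc k = (x ^ 2 ^ k) ^ 2"
    by (simp add: power_mult[symmetric] mult.commute)
  then show ?case
    using Suc by (simp add: lam_def abs_tr_square)
qed simp

lemma sum_lam: "(\<Sum>x\<in>UNIV. lam r (x :: 'a)) = 0"
proof -
  obtain y :: 'a where "abs_tr r y \<noteq> 0"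
    using abs_tr_not_identically_zero by blast
  then have lam_y: "lam r y = -1"
    by (simp add: lam_def)
  have "(\<Sum>x\<in>UNIV. lam r (x :: 'a)) = (\<Sum>x\<in>UNIV. lam r (x + y))"
    by (rule sum.reindex_bij_witness[of _ "\<lambda>x. x - y" "\<lambda>x. x + y"])
      (simp_all add: algebra_simps two_eq_zero)
  also have "\<dots> = - (\<Sum>x\<in>UNIV. lam r (x :: 'a))"
    by (simp add: lam_add lam_y sum_negf)
  finally show ?thesis
    by simp
qed

lemma sum_lam_mult:
  "(\<Sum>x\<in>UNIV. lam r (c * x :: 'a)) = (if c = 0 then real CARD('a) else 0)"
proof (cases "c = 0")
  case False
  have "(\<Sum>x\<in>UNIV. lam r (c * x :: 'a)) = (\<Sum>x\<in>UNIV. lam r (x :: 'a))"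
    by (rule sum.reindex_bij_witness[of _ "\<lambda>x. x / c" "\<lambda>x. c * x"]) (use False in auto)
  then show ?thesis
    using False sum_lam by simp
qed simp

lemma sum_lam_mult_nonzero:
  "(\<Sum>x\<in>UNIV - {0}. lam r (c * x :: 'a)) = (if c = 0 then real CARD('a) - 1 else -1)"
  using sum_lam_mult[of c] by (simp add: sum_diff1)

subsection \<open>Character sum evaluation of \<open>delta\<close>\<close>

lemma sum_lam_nz_tuples: "(\<Sum>\<alpha>\<in>nz_tuples m. lam r (\<Sum>i<m. \<alpha> i :: 'a)) = (-1) ^ m"
proof (induction m)
  case 0
  then show ?case
    by (simp add: nz_tuples_def)
next
  case (Suc m)
  have "(\<Sum>\<alpha>\<in>nz_tuples (Suc m). lam r (\<Sum>i<Suc m. \<alpha> i :: 'a)) =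
      (\<Sum>x\<in>UNIV - {0 :: 'a}. lam r x) * (\<Sum>\<alpha>\<in>nz_tuples m. lam r (\<Sum>i<m. \<alpha> i :: 'a))"
    by (simp add: sum_nz_tuples_Suc sum_lessThan_Suc_fun_upd lam_add sum_product mult.commute)
  also have "\<dots> = (-1) ^ Suc m"
    using Suc sum_lam_mult_nonzero[of 1] by simp
  finally show ?case .
qed

lemma card_level_set_char_sum:
  fixes f :: "'b \<Rightarrow> 'a"
  assumes "finite T"
  shows "real CARD('a) * real (card {x\<in>T. f x = b}) =
           real (card T) + (\<Sum>c\<in>UNIV - {0}. lam r (c * b) * (\<Sum>x\<in>T. lam r (c * f x)))"
proof -
  have "real CARD('a) * real (card {x\<in>T. f x = b}) = (\<Sum>x\<in>T. \<Sum>c\<in>UNIV. lam r ((f x + b) * c))"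
    using assms by (simp add: sum_lam_mult add_eq_0_iff_eq sum.inter_filter[symmetric])
  also have "\<dots> = (\<Sum>c\<in>UNIV. lam r (c * b) * (\<Sum>x\<in>T. lam r (c * f x)))"
    by (subst sum.swap) (simp add: algebra_simps lam_add sum_distrib_left)
  also have "\<dots> = real (card T) + (\<Sum>c\<in>UNIV - {0}. lam r (c * b) * (\<Sum>x\<in>T. lam r (c * f x)))"
    by (simp add: sum.remove[of UNIV 0])
  finally show ?thesis .
qed

lemma inv_prod_fiber_sum_power_2_power:
  "inv_prod_fiber_sum r m (b ^ 2 ^ s) = inv_prod_fiber_sum r m (b :: 'a)"
proof -
  let ?F = "\<lambda>\<gamma>::nat \<Rightarrow> 'a. if (\<Prod>i<m. inverse (\<gamma> i)) = b ^ 2 ^ s then lam r (\<Sum>i<m. \<gamma> i) else 0"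
  have "inv_prod_fiber_sum r m (b ^ 2 ^ s) = (\<Sum>\<delta>\<in>nz_tuples m. ?F (\<lambda>i\<in>{..<m}. \<delta> i ^ 2 ^ s))"
    unfolding inv_prod_fiber_sum_eq_sum_if
    by (rule sum_nz_tuples_reindex[OF bij_betw_power_2_power_nonzero[OF CHAR_eq_2]])
  also have "\<dots> = inv_prod_fiber_sum r m b"
    unfolding inv_prod_fiber_sum_eq_sum_if
  proof (intro sum.cong refl)
    fix \<delta> :: "nat \<Rightarrow> 'a"
    have "(\<Prod>i<m. inverse (\<delta> i ^ 2 ^ s)) = (\<Prod>i<m. inverse (\<delta> i)) ^ 2 ^ s"
      by (simp add: prod_power_distrib power_inverse)
    moreover have "(\<Sum>i<m. \<delta> i ^ 2 ^ s) = (\<Sum>i<m. \<delta> i) ^ 2 ^ s"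
      by (simp add: power_2_power_sum)
    ultimately show "?F (\<lambda>i\<in>{..<m}. \<delta> i ^ 2 ^ s) =
        (if (\<Prod>i<m. inverse (\<delta> i)) = b then lam r (\<Sum>i<m. \<delta> i) else 0)"
      by (simp add: power_2_power_eq_iff[OF CHAR_eq_2])
  qed
  finally show ?thesis .
qed

lemma sum_lam_scaled_nz_tuples:
  assumes "c \<noteq> 0"
  shows "(\<Sum>\<alpha>\<in>nz_tuples m. lam r (c * ((\<Sum>i<m. \<alpha> i) + (\<Prod>i<m. inverse (\<alpha> i))))) =
         (\<Sum>\<gamma>\<in>nz_tuples m. lam r (\<Sum>i<m. \<gamma> i) * lam r (c ^ Suc m * (\<Prod>i<m. inverse (\<gamma> i :: 'a))))"
proof -
  have "bij_betw (\<lambda>x. x / c) (UNIV - {0}) (UNIV - {0 :: 'a})"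
    by (rule bij_betw_byWitness[where f' = "\<lambda>x. x * c"]) (use assms in auto)
  then have "(\<Sum>\<alpha>\<in>nz_tuples m. lam r (c * ((\<Sum>i<m. \<alpha> i) + (\<Prod>i<m. inverse (\<alpha> i))))) =
      (\<Sum>\<gamma>\<in>nz_tuples m. lam r (c * ((\<Sum>i<m. (\<lambda>i\<in>{..<m}. \<gamma> i / c) i) +
         (\<Prod>i<m. inverse ((\<lambda>i\<in>{..<m}. \<gamma> i / c) i)))))"
    by (rule sum_nz_tuples_reindex)
  also have "\<dots> = (\<Sum>\<gamma>\<in>nz_tuples m. lam r (c * ((\<Sum>i<m. \<gamma> i / c) + (\<Prod>i<m. c / \<gamma> i))))"
    by simp
  also have "\<dots> = (\<Sum>\<gamma>\<in>nz_tuples m. lam r ((\<Sum>i<m. \<gamma> i) + c ^ Suc m * (\<Prod>i<m. inverse (\<gamma> i))))"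
  proof (intro sum.cong refl arg_cong[where f = "lam r"])
    fix \<gamma> :: "nat \<Rightarrow> 'a"
    have "c * (\<Sum>i<m. \<gamma> i / c) = (\<Sum>i<m. \<gamma> i)"
      using assms by (simp add: sum_divide_distrib[symmetric])
    moreover have "c * (\<Prod>i<m. c / \<gamma> i) = c ^ Suc m * (\<Prod>i<m. inverse (\<gamma> i))"
      by (simp add: divide_inverse prod.distrib)
    ultimately show "c * ((\<Sum>i<m. \<gamma> i / c) + (\<Prod>i<m. c / \<gamma> i)) =
        (\<Sum>i<m. \<gamma> i) + c ^ Suc m * (\<Prod>i<m. inverse (\<gamma> i))"
      by (simp only: distrib_left)
  qed
  finally show ?thesis
    by (simp add: lam_add)
qed

lemma sum_lam_frobenius_twist:
  fixes b p :: 'a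
  shows "(\<Sum>c\<in>UNIV - {0}. lam r (c * b) * lam r (c ^ 2 ^ s * p)) =
     (if p = b ^ 2 ^ s then real CARD('a) - 1 else -1)"
proof -
  have "(\<Sum>c\<in>UNIV - {0}. lam r (c * b) * lam r (c ^ 2 ^ s * p)) =
        (\<Sum>c\<in>UNIV - {0 :: 'a}. lam r (c ^ 2 ^ s * (b ^ 2 ^ s + p)))"
  proof (intro sum.cong refl)
    fix c :: 'a
    have "lam r (c * b) = lam r ((c * b) ^ 2 ^ s)"
      by simp
    then show "lam r (c * b) * lam r (c ^ 2 ^ s * p) = lam r (c ^ 2 ^ s * (b ^ 2 ^ s + p))"
      by (simp only: lam_add distrib_left power_mult_distrib)
  qed
  also have "\<dots> = (\<Sum>u\<in>UNIV - {0 :: 'a}. lam r (u * (b ^ 2 ^ s + p)))"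
    by (rule sum.reindex_bij_betw[OF bij_betw_power_2_power_nonzero[OF CHAR_eq_2],
          where g = "\<lambda>u. lam r (u * (b ^ 2 ^ s + p))"])
  also have "\<dots> = (if b ^ 2 ^ s + p = 0 then real CARD('a) - 1 else -1)"
    by (simp only: mult.commute[of _ "b ^ 2 ^ s + p"] sum_lam_mult_nonzero)
  also have "b ^ 2 ^ s + p = 0 \<longleftrightarrow> p = b ^ 2 ^ s"
    by (auto simp: add_eq_0_iff_eq)
  finally show ?thesis .
qed

lemma sum_lam_nz_tuples_weighted:
  "(\<Sum>\<gamma>\<in>nz_tuples m. lam r (\<Sum>i<m. \<gamma> i) *
      (if (\<Prod>i<m. inverse (\<gamma> i)) = a then real CARD('a) - 1 else -1)) =
     real CARD('a) * inv_prod_fiber_sum r m (a :: 'a) - (-1) ^ m"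
proof -
  have "(\<Sum>\<gamma>\<in>nz_tuples m. lam r (\<Sum>i<m. \<gamma> i) *
      (if (\<Prod>i<m. inverse (\<gamma> i)) = a then real CARD('a) - 1 else -1)) =
    (\<Sum>\<gamma>\<in>nz_tuples m. real CARD('a) *
      (if (\<Prod>i<m. inverse (\<gamma> i)) = a then lam r (\<Sum>i<m. \<gamma> i) else 0) - lam r (\<Sum>i<m. \<gamma> i))"
    by (intro sum.cong refl) (simp add: algebra_simps)
  then show ?thesis
    by (simp add: sum_subtractf sum_distrib_left inv_prod_fiber_sum_eq_sum_if sum_lam_nz_tuples)
qed

lemma real_card_mult_delta:
  assumes "Suc m = 2 ^ s" "0 < s"
  shows "real CARD('a) * real (delta m (b :: 'a)) =
           (real CARD('a) - 1) ^ m + 1 + real CARD('a) * inv_prod_fiber_sum r m (b ^ 2 ^ s)"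
proof -
  let ?P = "\<lambda>\<gamma>::nat \<Rightarrow> 'a. \<Prod>i<m. inverse (\<gamma> i)"
  have "even (Suc m)"
    using assms by simp
  then have "odd m"
    by simp
  have "real CARD('a) * real (delta m b) = real (card (nz_tuples m :: (nat \<Rightarrow> 'a) set)) +
      (\<Sum>c\<in>UNIV - {0}. lam r (c * b) * (\<Sum>\<alpha>\<in>nz_tuples m. lam r (c * ((\<Sum>i<m. \<alpha> i) + ?P \<alpha>))))"
    unfolding delta_def by (rule card_level_set_char_sum[OF finite_nz_tuples])
  also have "(\<Sum>c\<in>UNIV - {0}. lam r (c * b) * (\<Sum>\<alpha>\<in>nz_tuples m. lam r (c * ((\<Sum>i<m. \<alpha> i) + ?P \<alpha>)))) =
      (\<Sum>c\<in>UNIV - {0}. lam r (c * b) *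
         (\<Sum>\<gamma>\<in>nz_tuples m. lam r (\<Sum>i<m. \<gamma> i) * lam r (c ^ 2 ^ s * ?P \<gamma>)))"
    by (intro sum.cong refl) (simp add: sum_lam_scaled_nz_tuples assms(1))
  also have "\<dots> = (\<Sum>\<gamma>\<in>nz_tuples m. lam r (\<Sum>i<m. \<gamma> i) *
      (\<Sum>c\<in>UNIV - {0}. lam r (c * b) * lam r (c ^ 2 ^ s * ?P \<gamma>)))"
    by (simp add: sum_distrib_left mult.left_commute sum.swap[where A = "UNIV - {0}"])
  also have "\<dots> = (\<Sum>\<gamma>\<in>nz_tuples m. lam r (\<Sum>i<m. \<gamma> i) *
      (if ?P \<gamma> = b ^ 2 ^ s then real CARD('a) - 1 else -1))"
    by (simp only: sum_lam_frobenius_twist)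
  also have "\<dots> = real CARD('a) * inv_prod_fiber_sum r m (b ^ 2 ^ s) + 1"
    using \<open>odd m\<close> by (simp add: sum_lam_nz_tuples_weighted)
  finally show ?thesis
    using finite_UNIV_card_ge_0[where 'a='a] by (simp add: card_nz_tuples of_nat_diff)
qed

end

theorem proposition11:
  fixes n s r q :: nat
  assumes "s > 0" "r > 0" "n = 2 ^ s" "q = 2 ^ r" "CARD('a::{field,finite}) = q"
  shows "real (delta (n - 1) (0::'a)) = ((real q - 1) ^ (n - 1) + 1) / real q
         \<and> (\<forall>\<beta>::'a. \<beta> \<noteq> 0 \<longrightarrow>
         real (delta (n - 1) \<beta>) = Kl r (n - 2) (inverse \<beta>) + ((real q - 1) ^ (n - 1) + 1) / real q)"
proof -
  have card_eq: "CARD('a) = 2 ^ r"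
    using assms(4,5) by simp
  have "2 ^ 1 \<le> n"
    using assms(1,3) power_increasing[of 1 s "2 :: nat"] by simp
  then have n_Suc: "n - 1 = Suc (n - 2)" "Suc (n - 1) = 2 ^ s"
    using assms(3) by simp_all
  have "real (delta (n - 1) \<beta>) =
      ((real q - 1) ^ (n - 1) + 1) / real q + inv_prod_fiber_sum r (n - 1) \<beta>" for \<beta> :: 'a
    using real_card_mult_delta[OF card_eq n_Suc(2) assms(1), of \<beta>] assms(4,5)
    by (simp add: inv_prod_fiber_sum_power_2_power[OF card_eq] field_simps)
  moreover have "inv_prod_fiber_sum r (n - 1) \<beta> = Kl r (n - 2) (inverse \<beta>)" if "\<beta> \<noteq> 0" for \<beta> :: 'a
    unfolding n_Suc(1) by (rule inv_prod_fiber_sum_Suc[OF that])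
  ultimately show ?thesis
    by simp
qed

end
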